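(* For all $1\le a\le n$, $S_a\cdot L(u)=0$, i.e. every coefficient of the formal power series $L(u)$ in $D$ is annihilated by $S_a$.
   Context: Fix $n\ge4$. Let $Q_a(u)$ ($1\le a\le n$, $u\in\mathbb C$) be algebraically independent commuting indeterminates, $\mathcal Q=\mathbb Z[Q_a(u)^{\pm1}]$. Bilinear form of type $D_n$: $(\alpha_a|\alpha_a)=2$, $(\alpha_a|\alpha_{a+1})=(\alpha_{a+1}|\alpha_a)=-1$ for $1\le a\le n-2$, $(\alpha_{n-2}|\alpha_n)=(\alpha_n|\alpha_{n-2})=-1$, all other $(\alpha_a|\alpha_b)=0$ ($a\ne b$). Put $Y_a(u)=Q_a(u-1)/Q_a(u+1)$, $Y_0(u)=1$, $\mathcal Y=\mathbb Z[Y_a(u)^{\pm1}]$. Define $z_a(u)=\frac{Y_a(u+a)}{Y_{a-1}(u+a+1)}$, $z_{\bar a}(u)=\frac{Y_{a-1}(u+2n-a-1)}{Y_a(u+2n-a)}$ for $1\le a\le n-2$; $z_{n-1}(u)=\frac{Y_n(u+n-1)Y_{n-1}(u+n-1)}{Y_{n-2}(u+n)}$, $z_{\overline{n-1}}(u)=\frac{Y_{n-2}(u+n)}{Y_n(u+n+1)Y_{n-1}(u+n+1)}$, $z_n(u)=\frac{Y_n(u+n-1)}{Y_{n-1}(u+n+1)}$, $z_{\bar n}(u)=\frac{Y_{n-1}(u+n-1)}{Y_n(u+n+1)}$. In the ring of formal power series $\sum_{j\ge0}c_j(u)D^j$ ($c_j(u)\in\mathcal Y$, $D\,c(u)=c(u+1)D$)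 define \[ L(u)=(1-z_{\bar1}(u)D^2)\cdots(1-z_{\bar n}(u)D^2)\,(1-z_n(u)z_{\bar n}(u+2)D^4)^{-1}\,(1-z_n(u)D^2)\cdots(1-z_1(u)D^2), \] with $(1-cD^4)^{-1}=\sum_{k\ge0}(cD^4)^k$. Screening: let $A_a(u)=\prod_{b=1}^n\frac{Q_b(u-(\alpha_a|\alpha_b))}{Q_b(u+(\alpha_a|\alpha_b))}$; let $\mathcal S$ be the commutative ring generated over $\mathcal Q$ by symbols $S_a(u)$ subject to $S_a(u+2)=A_a(u+1)S_a(u)$. $S_a:\mathcal Y\to\mathcal S$ is the additive map obeying the Leibniz rule with $S_a\cdot Y_b(u)=\delta_{ab}Y_b(u)S_b(u)$; it acts on power series in $D$ coefficientwise. *)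

theory Defs
  imports Complex_Main "HOL-Library.Poly_Mapping"
begin

text \<open>Variables are pairs (a,u) with a a node index and u a complex spectral parameter.
  A Laurent polynomial ring Z[x_v^(+-1)] is the group ring of the free abelian group
  of exponent vectors (v =>0 int), i.e. the type below.\<close>

type_synonym var = "nat \<times> complex"
type_synonym lpoly = "(var \<Rightarrow>\<^sub>0 int) \<Rightarrow>\<^sub>0 int"

definition lmono :: "(var \<Rightarrow>\<^sub>0 int) \<Rightarrow> lpoly" where
  "lmono e = Poly_Mapping.single e 1"

text \<open>Y-ring: variables (a,u) stand for Y_a(u) (a = 1..n).  Y_0(u) = 1.\<close>

definition Yv :: "nat \<Rightarrow> complex \<Rightarrow> lpoly" where
  "Yv a u = (if a = 0 then 1 else lmono (Poly_Mapping.single (a,u) 1))"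

definition Yinv :: "nat \<Rightarrow> complex \<Rightarrow> lpoly" where
  "Yinv a u = (if a = 0 then 1 else lmono (Poly_Mapping.single (a,u) (-1)))"

text \<open>Q-ring: variables (a,u) stand for Q_a(u).  Embedding of the Y-ring into the Q-ring,
  Y_a(u) = Q_a(u-1)/Q_a(u+1).\<close>

definition embexp :: "(var \<Rightarrow>\<^sub>0 int) \<Rightarrow> (var \<Rightarrow>\<^sub>0 int)" where
  "embexp e = (\<Sum>(b,v)\<in>Poly_Mapping.keys e. Poly_Mapping.single (b, v - 1) (Poly_Mapping.lookup e (b,v))
                               - Poly_Mapping.single (b, v + 1) (Poly_Mapping.lookup e (b,v)))"

definition embY :: "lpoly \<Rightarrow> lpoly" where
  "embY \<chi> = (\<Sum>e\<in>Poly_Mapping.keys \<chi>. Poly_Mapping.single (embexp e) (Poly_Mapping.lookup \<chi> e))"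

definition cartanD :: "nat \<Rightarrow> nat \<Rightarrow> nat \<Rightarrow> int" where
  "cartanD n a b =
     (if a = b then 2
      else if (1 \<le> a \<and> a \<le> n - 2 \<and> b = a + 1) \<or> (1 \<le> b \<and> b \<le> n - 2 \<and> a = b + 1) then -1
      else if (a = n - 2 \<and> b = n) \<or> (a = n \<and> b = n - 2) then -1
      else 0)"

text \<open>A_a(u) = prod_b Q_b(u - (a|b)) / Q_b(u + (a|b)), as a monomial of the Q-ring.\<close>

definition Aexp :: "nat \<Rightarrow> nat \<Rightarrow> complex \<Rightarrow> (var \<Rightarrow>\<^sub>0 int)" where
  "Aexp n a u = (\<Sum>b\<in>{1..n}. Poly_Mapping.single (b, u - of_int (cartanD n a b)) 1
                              - Poly_Mapping.single (b, u + of_int (cartanD n a b)) 1)"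

text \<open>Polynomial ring over the Q-ring in the symbols S_a(u); S is its quotient by the
  ideal generated by S_a(u+2) - A_a(u+1) S_a(u).\<close>

type_synonym spoly = "(var \<Rightarrow>\<^sub>0 nat) \<Rightarrow>\<^sub>0 lpoly"

definition Sconst :: "lpoly \<Rightarrow> spoly" where
  "Sconst q = Poly_Mapping.single 0 q"

definition Svar :: "nat \<Rightarrow> complex \<Rightarrow> spoly" where
  "Svar a u = Poly_Mapping.single (Poly_Mapping.single (a,u) 1) 1"

inductive_set Srel_ideal :: "nat \<Rightarrow> spoly set" for n :: nat where
  zero: "0 \<in> Srel_ideal n"
| add: "x \<in> Srel_ideal n \<Longrightarrow> y \<in> Srel_ideal n \<Longrightarrow> x + y \<in> Srel_ideal n"
| gen: "1 \<le> a \<Longrightarrow> a \<le> n \<Longrightarrow>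
        r * (Svar a (u + 2) - Sconst (lmono (Aexp n a (u + 1))) * Svar a u) \<in> Srel_ideal n"

definition S_zero :: "nat \<Rightarrow> spoly \<Rightarrow> bool" where
  "S_zero n x \<longleftrightarrow> x \<in> Srel_ideal n"

text \<open>The unique additive map Y -> S with Leibniz rule and S_a Y_b(u) = delta_ab Y_b(u) S_b(u):
  on a Laurent monomial Y^e it gives sum_u e(a,u) Y^e S_a(u).\<close>

definition screen :: "nat \<Rightarrow> lpoly \<Rightarrow> spoly" where
  "screen a \<chi> = (\<Sum>e\<in>Poly_Mapping.keys \<chi>. of_int (Poly_Mapping.lookup \<chi> e) * Sconst (embY (lmono e)) *
        (\<Sum>(b,v)\<in>Poly_Mapping.keys e. if b = a then of_int (Poly_Mapping.lookup e (b,v)) * Svar a v else 0))"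

definition zz :: "nat \<Rightarrow> nat \<Rightarrow> complex \<Rightarrow> lpoly" where
  "zz n a u =
     (if a \<le> n - 2 then Yv a (u + of_nat a) * Yinv (a - 1) (u + of_nat a + 1)
      else if a = n - 1 then Yv n (u + of_nat n - 1) * Yv (n - 1) (u + of_nat n - 1)
                              * Yinv (n - 2) (u + of_nat n)
      else Yv n (u + of_nat n - 1) * Yinv (n - 1) (u + of_nat n + 1))"

definition zbar :: "nat \<Rightarrow> nat \<Rightarrow> complex \<Rightarrow> lpoly" where
  "zbar n a u =
     (if a \<le> n - 2 then Yv (a - 1) (u + 2 * of_nat n - of_nat a - 1)
                         * Yinv a (u + 2 * of_nat n - of_nat a)
      else if a = n - 1 then Yv (n - 2) (u + of_nat n)
                              * Yinv n (u + of_nat n + 1) * Yinv (n - 1) (u + of_nat n + 1)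
      else Yv (n - 1) (u + of_nat n - 1) * Yinv n (u + of_nat n + 1))"

text \<open>A series sum_j c_j(u) D^j is represented by c :: nat => complex => Y;
  D c(u) = c(u+1) D gives the product below.\<close>

type_synonym dser = "nat \<Rightarrow> complex \<Rightarrow> lpoly"

definition dmult :: "dser \<Rightarrow> dser \<Rightarrow> dser" where
  "dmult f g = (\<lambda>k u. \<Sum>i\<le>k. f i u * g (k - i) (u + of_nat i))"

definition dunit :: dser where
  "dunit = (\<lambda>k u. if k = 0 then 1 else 0)"

definition dmono :: "(complex \<Rightarrow> lpoly) \<Rightarrow> nat \<Rightarrow> dser" where
  "dmono c d = (\<lambda>k u. if k = d then c u else 0)"

primrec dpow :: "dser \<Rightarrow> nat \<Rightarrow> dser" where
  "dpow f 0 = dunit"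
| "dpow f (Suc m) = dmult f (dpow f m)"

definition dfac :: "(complex \<Rightarrow> lpoly) \<Rightarrow> dser" where
  "dfac c = (\<lambda>k u. dunit k u - dmono c 2 k u)"

text \<open>(1 - c D^4)^(-1) = sum_k (c D^4)^k; the coefficient of D^j only receives
  contributions from k \<le> j.\<close>
definition dgeom4 :: "(complex \<Rightarrow> lpoly) \<Rightarrow> dser" where
  "dgeom4 c = (\<lambda>j u. \<Sum>k\<le>j. dpow (dmono c 4) k j u)"

definition Lser :: "nat \<Rightarrow> dser" where
  "Lser n = foldr dmult
     (map (\<lambda>a. dfac (zbar n a)) [1..<n+1]
      @ [dgeom4 (\<lambda>u. zz n n u * zbar n n (u + 2))]
      @ map (\<lambda>a. dfac (zz n a)) (rev [1..<n+1]))
     dunit"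

end

(*
  S_a is a derivation from the Y-ring to S relative to the embedding Y -> Q -> S, so the
  elements it sends into the ideal of relations form a subring, and so do the D-series with
  coefficients in that subring.  A factor 1 - z D^2 in which Y_a does not occur lies in it.
  The factors in which Y_a occurs come in adjacent pairs (1 - x D^2)(1 - y D^2) with
  y(u) = x(u) A_a(w + 1): then S_a (x + y) is a multiple of the relation
  S_a(w + 2) = A_a(w + 1) S_a(w), while x(u) y(u + 2) is free of Y_a, so the product of the
  pair lies in the subring.  For a = n the partners are separated by (1 - Y X)^-1, where
  X = zbar_n D^2 and Y = z_n D^2, and the ring identity
  (1 - X) (1 - Y X)^-1 (1 - Y) = (1 - Y) (1 - X Y)^-1 (1 - X) brings them together.
*)

theory Submission
  imports Defs
begin

section \<open>The screening operator as a derivation\<close>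

lemma lmono_mult: "lmono e * lmono f = lmono (e + f)"
  by (simp add: lmono_def mult_single)

lemma lmono_0: "lmono 0 = 1"
  by (simp add: lmono_def)

lemma lpoly_pair_induct:
  fixes P :: "lpoly \<Rightarrow> lpoly \<Rightarrow> bool"
  assumes "\<And>e f. P (lmono e) (lmono f)"
    and "\<And>y. P 0 y" and "\<And>x1 x2 y. P x1 y \<Longrightarrow> P x2 y \<Longrightarrow> P (x1 - x2) y"
    and "\<And>x. P x 0" and "\<And>x y1 y2. P x y1 \<Longrightarrow> P x y2 \<Longrightarrow> P x (y1 - y2)"
  shows "P x y"
proof -
  have lmono_left: "P (lmono e) y" for e
    using subset_UNIV by (induction y rule: frag_induction) (auto simp: lmono_def[symmetric] intro: assms)
  show ?thesis
    using subset_UNIV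
    by (induction x rule: frag_induction) (auto simp: lmono_def[symmetric] intro: assms lmono_left)
qed

text \<open>The logarithmic derivative \<open>S\<^sub>a(Y\<^sup>e) / Y\<^sup>e\<close> of a Laurent monomial, see \<open>screen_lmono\<close>.\<close>

definition screen_dlog :: "nat \<Rightarrow> (var \<Rightarrow>\<^sub>0 int) \<Rightarrow> spoly" where
  "screen_dlog a e =
     (\<Sum>k\<in>Poly_Mapping.keys e. if fst k = a then of_int (Poly_Mapping.lookup e k) * Svar a (snd k) else 0)"

lemma additive_screen_dlog: "additive (screen_dlog a)"
proof
  fix e f :: "var \<Rightarrow>\<^sub>0 int"
  show "screen_dlog a (e + f) = screen_dlog a e + screen_dlog a f"
    unfolding screen_dlog_def
    by (rule setsum_keys_plus_distrib[where f = "\<lambda>k c. if fst k = a then of_int c * Svar a (snd k) else 0"])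
       (auto simp: distrib_right)
qed

lemmas screen_dlog_zero = additive.zero[OF additive_screen_dlog]
  and screen_dlog_add = additive.add[OF additive_screen_dlog]
  and screen_dlog_diff = additive.diff[OF additive_screen_dlog]
  and screen_dlog_sum = additive.sum[OF additive_screen_dlog]

lemma screen_dlog_single:
  "screen_dlog a (Poly_Mapping.single (b, v) c) = (if b = a then of_int c * Svar a v else 0)"
  by (cases "c = 0") (simp_all add: screen_dlog_def)

lemma additive_embexp: "additive embexp"
proof
  fix e f :: "var \<Rightarrow>\<^sub>0 int"
  show "embexp (e + f) = embexp e + embexp f"
    unfolding embexp_def case_prod_beta prod.collapse
    by (rule setsum_keys_plus_distrib[where
          f = "\<lambda>k c. Poly_Mapping.single (fst k, snd k - 1) c - Poly_Mapping.single (fst k, snd k + 1) c"])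
       (auto simp: single_add)
qed

lemmas embexp_zero = additive.zero[OF additive_embexp]
  and embexp_add = additive.add[OF additive_embexp]
  and embexp_diff = additive.diff[OF additive_embexp]
  and embexp_sum = additive.sum[OF additive_embexp]

lemma embexp_single:
  "embexp (Poly_Mapping.single (b, v) c) = Poly_Mapping.single (b, v - 1) c - Poly_Mapping.single (b, v + 1) c"
  by (cases "c = 0") (simp_all add: embexp_def)

lemma additive_embY: "additive embY"
proof
  fix x y :: lpoly
  show "embY (x + y) = embY x + embY y"
    unfolding embY_def
    by (rule setsum_keys_plus_distrib[where f = "\<lambda>k c. Poly_Mapping.single (embexp k) c"])
       (auto simp: single_add)
qed

lemmas embY_zero = additive.zero[OF additive_embY]
  and embY_add = additive.add[OF additive_embY]
  and embY_diff = additive.diff[OF additive_embY]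

lemma embY_lmono: "embY (lmono e) = lmono (embexp e)"
  by (simp add: embY_def lmono_def)

lemma embY_mult: "embY (x * y) = embY x * embY y"
  by (induction x y rule: lpoly_pair_induct)
     (simp_all add: lmono_mult embY_lmono embexp_add embY_zero embY_diff left_diff_distrib right_diff_distrib)

definition embS :: "lpoly \<Rightarrow> spoly" where
  "embS x = Sconst (embY x)"

lemma additive_embS: "additive embS"
  by (simp add: additive_def embS_def Sconst_def embY_add single_add)

lemmas embS_zero = additive.zero[OF additive_embS]
  and embS_diff = additive.diff[OF additive_embS]

lemma embS_mult: "embS (x * y) = embS x * embS y"
  by (simp add: embS_def Sconst_def embY_mult mult_single)

lemma embS_lmono_mult: "embS (lmono (e + f)) = embS (lmono e) * embS (lmono f)"
  by (simp add: lmono_mult[symmetric] embS_mult)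

lemma screen_eq:
  "screen a x = (\<Sum>e\<in>Poly_Mapping.keys x. of_int (Poly_Mapping.lookup x e) * embS (lmono e) * screen_dlog a e)"
  unfolding screen_def screen_dlog_def embS_def case_prod_beta prod.collapse ..

lemma additive_screen: "additive (screen a)"
proof
  fix x y :: lpoly
  show "screen a (x + y) = screen a x + screen a y"
    unfolding screen_eq
    by (rule setsum_keys_plus_distrib[where f = "\<lambda>e c. of_int c * embS (lmono e) * screen_dlog a e"])
       (auto simp: distrib_right)
qed

lemmas screen_zero = additive.zero[OF additive_screen]
  and screen_add = additive.add[OF additive_screen]
  and screen_diff = additive.diff[OF additive_screen]

lemma screen_lmono: "screen a (lmono e) = embS (lmono e) * screen_dlog a e"
  by (simp add: screen_eq lmono_def)

lemma screen_1 [simp]: "screen a 1 = 0"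
  using screen_lmono[of a 0] by (simp add: lmono_0 screen_dlog_zero)

lemma screen_mult: "screen a (x * y) = screen a x * embS y + embS x * screen a y"
  by (induction x y rule: lpoly_pair_induct)
     (simp_all add: lmono_mult screen_lmono embS_lmono_mult screen_dlog_add screen_zero screen_diff
       embS_zero embS_diff algebra_simps)

lemma Srel_ideal_mult: "x \<in> Srel_ideal n \<Longrightarrow> r * x \<in> Srel_ideal n"
proof (induction x arbitrary: r rule: Srel_ideal.induct)
  case (gen a r' u)
  then show ?case
    using Srel_ideal.gen[of a n "r * r'" u] by (simp add: mult.assoc)
qed (simp_all add: Srel_ideal.zero Srel_ideal.add distrib_left)

lemma Srel_ideal_diff: "x \<in> Srel_ideal n \<Longrightarrow> y \<in> Srel_ideal n \<Longrightarrow> x - y \<in> Srel_ideal n"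
  using Srel_ideal.add[of x n "(- 1) * y"] Srel_ideal_mult[of y n "- 1"] by simp

definition screen_kernel :: "nat \<Rightarrow> nat \<Rightarrow> lpoly set" where
  "screen_kernel n a = {x. screen a x \<in> Srel_ideal n}"

lemma screen_kernel_0 [simp]: "0 \<in> screen_kernel n a"
  and screen_kernel_1 [simp]: "1 \<in> screen_kernel n a"
  by (simp_all add: screen_kernel_def screen_zero Srel_ideal.zero)

lemma screen_kernel_add: "x \<in> screen_kernel n a \<Longrightarrow> y \<in> screen_kernel n a \<Longrightarrow> x + y \<in> screen_kernel n a"
  by (simp add: screen_kernel_def screen_add Srel_ideal.add)

lemma screen_kernel_diff: "x \<in> screen_kernel n a \<Longrightarrow> y \<in> screen_kernel n a \<Longrightarrow> x - y \<in> screen_kernel n a"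
  by (simp add: screen_kernel_def screen_diff Srel_ideal_diff)

lemma screen_kernel_mult: "x \<in> screen_kernel n a \<Longrightarrow> y \<in> screen_kernel n a \<Longrightarrow> x * y \<in> screen_kernel n a"
  by (simp add: screen_kernel_def screen_mult Srel_ideal.add Srel_ideal_mult mult.commute[of _ "embS _"])

lemma screen_kernel_sum: "(\<And>i. i \<in> I \<Longrightarrow> f i \<in> screen_kernel n a) \<Longrightarrow> sum f I \<in> screen_kernel n a"
  by (induction I rule: infinite_finite_induct) (simp_all add: screen_kernel_add)

lemma screen_kernel_prod: "(\<And>i. i \<in> I \<Longrightarrow> f i \<in> screen_kernel n a) \<Longrightarrow> prod f I \<in> screen_kernel n a"
  by (induction I rule: infinite_finite_induct) (simp_all add: screen_kernel_mult)

lemma lmono_in_screen_kernel: "screen_dlog a e = 0 \<Longrightarrow> lmono e \<in> screen_kernel n a"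
  by (simp add: screen_kernel_def screen_lmono Srel_ideal.zero)

lemma lmono_add_lmono_in_screen_kernel:
  assumes "1 \<le> a" "a \<le> n"
    and "screen_dlog a e = Svar a w" "screen_dlog a f = - Svar a (w + 2)"
    and "embexp e = embexp f + Aexp n a (w + 1)"
  shows "lmono f + lmono e \<in> screen_kernel n a"
proof -
  have "embS (lmono e) = embS (lmono f) * Sconst (lmono (Aexp n a (w + 1)))"
    by (simp add: embS_def embY_lmono assms(5) lmono_mult[symmetric] Sconst_def mult_single)
  then have "screen a (lmono f + lmono e)
      = - embS (lmono f) * (Svar a (w + 2) - Sconst (lmono (Aexp n a (w + 1))) * Svar a w)"
    by (simp add: screen_add screen_lmono assms(3,4) algebra_simps)
  also have "\<dots> \<in> Srel_ideal n"
    by (rule Srel_ideal.gen) (use assms in auto)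
  finally show ?thesis
    by (simp add: screen_kernel_def)
qed

section \<open>Twisted power series in \<open>D\<close>\<close>

text \<open>The point is \<open>X G = G' X\<close> and \<open>Y G' = G Y\<close>: \<open>X\<close> and \<open>Y\<close> pass through the inverse,
  exchanging the order of the product inside it.\<close>

lemma one_minus_swap_inverse:
  fixes X Y G G' :: "'a::ring_1"
  assumes G_left: "(1 - Y * X) * G = 1" and G_right: "G * (1 - Y * X) = 1"
    and G'_left: "(1 - X * Y) * G' = 1" and G'_right: "G' * (1 - X * Y) = 1"
  shows "(1 - X) * G * (1 - Y) = (1 - Y) * G' * (1 - X)"
proof -
  have XG: "X * G = G' * X"
  proof -
    have "X * G = G' * (1 - X * Y) * X * G"
      by (simp add: G'_right)
    also have "\<dots> = G' * X * ((1 - Y * X) * G)"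
      by (simp add: algebra_simps)
    finally show ?thesis
      by (simp add: G_left)
  qed
  have YG': "Y * G' = G * Y"
  proof -
    have "Y * G' = G * (1 - Y * X) * Y * G'"
      by (simp add: G_right)
    also have "\<dots> = G * Y * ((1 - X * Y) * G')"
      by (simp add: algebra_simps)
    finally show ?thesis
      by (simp add: G'_left)
  qed
  have XGY: "X * G * Y = G' - 1"
  proof -
    have "X * G * Y = G' - G' * (1 - X * Y)"
      by (simp add: XG algebra_simps)
    then show ?thesis
      by (simp add: G'_right)
  qed
  have YG'X: "Y * G' * X = G - 1"
  proof -
    have "Y * G' * X = G - G * (1 - Y * X)"
      by (simp add: YG' algebra_simps)
    then show ?thesis
      by (simp add: G_right)
  qed
  have "(1 - X) * G * (1 - Y) = G - X * G - G * Y + X * G * Y"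
    by (simp add: algebra_simps)
  also have "\<dots> = G' - Y * G' - G' * X + Y * G' * X"
    unfolding XGY YG'X unfolding XG YG' by (simp add: algebra_simps)
  also have "\<dots> = (1 - Y) * G' * (1 - X)"
    by (simp add: algebra_simps)
  finally show ?thesis .
qed

lemma sum_sum_reindex_triangle:
  fixes f :: "nat \<Rightarrow> nat \<Rightarrow> nat \<Rightarrow> 'a::comm_monoid_add"
  shows "(\<Sum>j\<le>k. \<Sum>i\<le>j. f i (j - i) (m - j)) = (\<Sum>j\<le>k. \<Sum>i\<le>k - j. f j i (m - j - i))"
  by (induct k) (simp_all add: Suc_diff_le sum.distrib add.assoc)

lemma dmult_assoc: "dmult (dmult f g) h = dmult f (dmult g h)"
proof (intro ext)
  fix k u
  define F where "F j l m = f j u * g l (u + of_nat j) * h m (u + of_nat j + of_nat l)" for j l m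
  have "dmult (dmult f g) h k u = (\<Sum>i\<le>k. \<Sum>j\<le>i. F j (i - j) (k - i))"
    unfolding dmult_def F_def sum_distrib_right
    by (intro sum.cong refl) (simp add: of_nat_diff)
  also have "\<dots> = (\<Sum>j\<le>k. \<Sum>l\<le>k - j. F j l (k - j - l))"
    by (rule sum_sum_reindex_triangle)
  also have "\<dots> = dmult f (dmult g h) k u"
    unfolding dmult_def F_def sum_distrib_left
    by (intro sum.cong refl) (simp add: mult.assoc add.assoc)
  finally show "dmult (dmult f g) h k u = dmult f (dmult g h) k u" .
qed

lemma dmult_dmono_left:
  "dmult (dmono c d) g k u = (if d \<le> k then c u * g (k - d) (u + of_nat d) else 0)"
proof -
  have "dmult (dmono c d) g k u = (\<Sum>i\<le>k. if i = d then c u * g (k - d) (u + of_nat d) else 0)"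
    unfolding dmult_def dmono_def by (intro sum.cong refl) auto
  then show ?thesis
    by simp
qed

lemma dmult_dmono_right:
  "dmult g (dmono c d) k u = (if d \<le> k then g (k - d) u * c (u + of_nat (k - d)) else 0)"
proof -
  have "dmult g (dmono c d) k u = (\<Sum>i\<le>k. if i = k - d \<and> d \<le> k then g i u * c (u + of_nat i) else 0)"
    unfolding dmult_def dmono_def by (intro sum.cong refl) auto
  then show ?thesis
    by (simp cong: conj_cong)
qed

lemma dunit_eq_dmono: "dunit = dmono (\<lambda>_. 1) 0"
  by (simp add: fun_eq_iff dunit_def dmono_def)

lemma dmult_dunit_left: "dmult dunit f = f"
  by (simp add: fun_eq_iff dunit_eq_dmono dmult_dmono_left)

lemma dmult_dunit_right: "dmult f dunit = f"
  by (simp add: fun_eq_iff dunit_eq_dmono dmult_dmono_right)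

typedef dseries = "UNIV :: dser set"
  morphisms coeff Abs_dseries
  by simp

setup_lifting type_definition_dseries

instantiation dseries :: ring_1
begin

lift_definition zero_dseries :: dseries is "\<lambda>k u. 0" .
lift_definition one_dseries :: dseries is dunit .
lift_definition plus_dseries :: "dseries \<Rightarrow> dseries \<Rightarrow> dseries" is "\<lambda>f g k u. f k u + g k u" .
lift_definition minus_dseries :: "dseries \<Rightarrow> dseries \<Rightarrow> dseries" is "\<lambda>f g k u. f k u - g k u" .
lift_definition uminus_dseries :: "dseries \<Rightarrow> dseries" is "\<lambda>f k u. - f k u" .
lift_definition times_dseries :: "dseries \<Rightarrow> dseries \<Rightarrow> dseries" is dmult .

instance
proof
  fix x y z :: dseries
  show "x * y * z = x * (y * z)"
    by transfer (rule dmult_assoc)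
  show "1 * x = x"
    by transfer (rule dmult_dunit_left)
  show "x * 1 = x"
    by transfer (rule dmult_dunit_right)
  show "(x + y) * z = x * z + y * z"
    by transfer (simp add: fun_eq_iff dmult_def distrib_right sum.distrib)
  show "x * (y + z) = x * y + x * z"
    by transfer (simp add: fun_eq_iff dmult_def distrib_left sum.distrib)
  show "(0::dseries) \<noteq> 1"
    by transfer (simp add: fun_eq_iff dunit_def)
qed (transfer; simp add: fun_eq_iff)+

end

lift_definition dmon :: "(complex \<Rightarrow> lpoly) \<Rightarrow> nat \<Rightarrow> dseries" is dmono .

lemma dmon_add: "dmon c d + dmon c' d = dmon (\<lambda>u. c u + c' u) d"
  by (simp add: coeff_inject[symmetric] plus_dseries.rep_eq dmon.rep_eq fun_eq_iff dmono_def)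

lemma dmon_mult: "dmon c d * dmon c' d' = dmon (\<lambda>u. c u * c' (u + of_nat d)) (d + d')"
  unfolding coeff_inject[symmetric] times_dseries.rep_eq dmon.rep_eq fun_eq_iff dmult_dmono_left
  by (auto simp: dmono_def)

lemma foldr_dmult_eq_coeff_prod_list: "foldr dmult fs dunit = coeff (prod_list (map Abs_dseries fs))"
  by (induction fs) (simp_all add: one_dseries.rep_eq times_dseries.rep_eq Abs_dseries_inverse)

lemma Abs_dseries_dfac: "Abs_dseries (dfac c) = 1 - dmon c 2"
  by (simp add: dfac_def minus_dseries_def one_dseries_def dmon_def Abs_dseries_inverse)

definition kernel_series :: "nat \<Rightarrow> nat \<Rightarrow> dseries \<Rightarrow> bool" where
  "kernel_series n a x \<longleftrightarrow> (\<forall>k u. coeff x k u \<in> screen_kernel n a)"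

lemma kernel_series_1: "kernel_series n a 1"
  by (simp add: kernel_series_def one_dseries.rep_eq dunit_def)

lemma kernel_series_add: "kernel_series n a x \<Longrightarrow> kernel_series n a y \<Longrightarrow> kernel_series n a (x + y)"
  by (simp add: kernel_series_def plus_dseries.rep_eq screen_kernel_add)

lemma kernel_series_diff: "kernel_series n a x \<Longrightarrow> kernel_series n a y \<Longrightarrow> kernel_series n a (x - y)"
  by (simp add: kernel_series_def minus_dseries.rep_eq screen_kernel_diff)

lemma kernel_series_mult: "kernel_series n a x \<Longrightarrow> kernel_series n a y \<Longrightarrow> kernel_series n a (x * y)"
  by (simp add: kernel_series_def times_dseries.rep_eq dmult_def screen_kernel_sum screen_kernel_mult)

lemma kernel_series_prod_list: "(\<And>x. x \<in> set xs \<Longrightarrow> kernel_series n a x) \<Longrightarrow> kernel_series n a (prod_list xs)"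
  by (induction xs) (simp_all add: kernel_series_1 kernel_series_mult)

lemma kernel_series_dmon: "(\<And>u. c u \<in> screen_kernel n a) \<Longrightarrow> kernel_series n a (dmon c d)"
  by (simp add: kernel_series_def dmon.rep_eq dmono_def)

lemma kernel_series_1_minus_dmon: "(\<And>u. c u \<in> screen_kernel n a) \<Longrightarrow> kernel_series n a (1 - dmon c d)"
  by (simp add: kernel_series_diff kernel_series_1 kernel_series_dmon)

lemma kernel_series_dfac_pair:
  assumes "\<And>u. x u + y u \<in> screen_kernel n a" "\<And>u. x u * y (u + 2) \<in> screen_kernel n a"
  shows "kernel_series n a ((1 - dmon x 2) * (1 - dmon y 2))"
proof -
  have "(1 - dmon x 2) * (1 - dmon y 2) = 1 - (dmon x 2 + dmon y 2) + dmon x 2 * dmon y 2"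
    by (simp add: algebra_simps)
  also have "\<dots> = 1 - dmon (\<lambda>u. x u + y u) 2 + dmon (\<lambda>u. x u * y (u + 2)) 4"
    by (simp add: dmon_add dmon_mult)
  finally show ?thesis
    using assms by (simp add: kernel_series_add kernel_series_diff kernel_series_1 kernel_series_dmon)
qed

lemma dpow_dmono_4: "dpow (dmono c 4) m = dmono (\<lambda>u. \<Prod>i<m. c (u + 4 * of_nat i)) (4 * m)"
proof (induction m)
  case 0
  show ?case
    by (simp add: dunit_eq_dmono)
next
  case (Suc m)
  have "(\<Prod>i<Suc m. c (u + 4 * of_nat i)) = c u * (\<Prod>i<m. c (u + 4 + 4 * of_nat i))" for u
    by (subst prod.lessThan_Suc_shift) (simp add: algebra_simps)
  then show ?case
    unfolding dpow.simps Suc fun_eq_iff dmult_dmono_left by (auto simp: dmono_def)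
qed

lemma dgeom4_eq: "dgeom4 c j u = (if 4 dvd j then (\<Prod>i<j div 4. c (u + 4 * of_nat i)) else 0)"
proof -
  have "dgeom4 c j u = (\<Sum>m\<le>j. if m = j div 4 \<and> 4 dvd j then (\<Prod>i<j div 4. c (u + 4 * of_nat i)) else 0)"
    unfolding dgeom4_def dpow_dmono_4 by (intro sum.cong refl) (auto simp: dmono_def)
  then show ?thesis
    by (simp cong: conj_cong)
qed

lemma dgeom4_less_4: "j < 4 \<Longrightarrow> dgeom4 c j u = dunit j u"
  by (auto simp: dgeom4_eq dunit_def elim!: dvdE)

lemma dgeom4_add_4_left: "dgeom4 c (j + 4) u = c u * dgeom4 c j (u + 4)"
proof -
  have "(\<Prod>i<Suc m. c (u + 4 * of_nat i)) = c u * (\<Prod>i<m. c (u + 4 + 4 * of_nat i))" for m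
    by (subst prod.lessThan_Suc_shift) (simp add: algebra_simps)
  then show ?thesis
    by (simp add: dgeom4_eq)
qed

lemma dgeom4_add_4_right: "dgeom4 c (j + 4) u = dgeom4 c j u * c (u + of_nat j)"
  by (auto simp: dgeom4_eq mult.commute elim!: dvdE)

lift_definition geom4 :: "(complex \<Rightarrow> lpoly) \<Rightarrow> dseries" is dgeom4 .

lemma geom4_inverse:
  shows "(1 - dmon c 4) * geom4 c = 1" and "geom4 c * (1 - dmon c 4) = 1"
proof -
  have split: "k < 4 \<or> (\<exists>j. k = j + 4)" for k :: nat
    by presburger
  note coeff_eqs = minus_dseries.rep_eq times_dseries.rep_eq one_dseries.rep_eq dmon.rep_eq geom4.rep_eq
  have "coeff ((1 - dmon c 4) * geom4 c) k u = dunit k u" for k u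
    using split[of k]
    by (auto simp: left_diff_distrib coeff_eqs dmult_dmono_left dgeom4_less_4 dgeom4_add_4_left dunit_def)
  moreover have "coeff (geom4 c * (1 - dmon c 4)) k u = dunit k u" for k u
    using split[of k]
    by (auto simp: right_diff_distrib coeff_eqs dmult_dmono_right dgeom4_less_4 dgeom4_add_4_right dunit_def)
  ultimately show "(1 - dmon c 4) * geom4 c = 1" "geom4 c * (1 - dmon c 4) = 1"
    by (simp_all add: coeff_inject[symmetric] fun_eq_iff one_dseries.rep_eq)
qed

lemma kernel_series_geom4: "(\<And>u. c u \<in> screen_kernel n a) \<Longrightarrow> kernel_series n a (geom4 c)"
  by (simp add: kernel_series_def geom4.rep_eq dgeom4_eq screen_kernel_prod)

section \<open>Exponents of \<open>A\<^sub>a\<close> and of the variables \<open>z\<close>\<close>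

definition Yexp :: "nat \<Rightarrow> complex \<Rightarrow> (var \<Rightarrow>\<^sub>0 int)" where
  "Yexp b v = (if b = 0 then 0 else Poly_Mapping.single (b, v) 1)"

lemma Yv_eq_lmono: "Yv b v = lmono (Yexp b v)"
  by (simp add: Yv_def Yexp_def lmono_0)

lemma Yinv_eq_lmono: "Yinv b v = lmono (- Yexp b v)"
  by (simp add: Yinv_def Yexp_def lmono_0 lmono_def single_uminus)

lemma screen_dlog_Yexp [simp]: "1 \<le> a \<Longrightarrow> screen_dlog a (Yexp b v) = (if b = a then Svar a v else 0)"
  by (simp add: Yexp_def screen_dlog_single screen_dlog_zero)

definition dynkin_nbrs :: "nat \<Rightarrow> nat \<Rightarrow> nat set" where
  "dynkin_nbrs n a = {b \<in> {1..n}. b \<noteq> a \<and> cartanD n a b = -1}"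

definition Aexp_Y :: "nat \<Rightarrow> nat \<Rightarrow> complex \<Rightarrow> (var \<Rightarrow>\<^sub>0 int)" where
  "Aexp_Y n a w = Yexp a (w - 1) + Yexp a (w + 1) - (\<Sum>b\<in>dynkin_nbrs n a. Yexp b w)"

lemma Aexp_eq_embexp_Aexp_Y:
  assumes "a \<in> {1..n}"
  shows "Aexp n a w = embexp (Aexp_Y n a w)"
proof -
  have "Poly_Mapping.single (b, w - of_int (cartanD n a b)) 1 - Poly_Mapping.single (b, w + of_int (cartanD n a b)) 1
      = (if b = a then embexp (Yexp a (w - 1) + Yexp a (w + 1)) else 0)
        - (if b \<in> dynkin_nbrs n a then embexp (Yexp b w) else 0)"
    if "b \<in> {1..n}" for b
  proof -
    have "cartanD n a b = (if b = a then 2 else if b \<in> dynkin_nbrs n a then -1 else 0)"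
      using that by (auto simp: cartanD_def dynkin_nbrs_def)
    moreover have "a \<notin> dynkin_nbrs n a"
      by (simp add: dynkin_nbrs_def)
    ultimately show ?thesis
      using that by (simp add: Yexp_def embexp_add embexp_single add.commute)
  qed
  then have "Aexp n a w = (\<Sum>b\<in>{1..n}. if b = a then embexp (Yexp a (w - 1) + Yexp a (w + 1)) else 0)
      - (\<Sum>b\<in>{1..n}. if b \<in> dynkin_nbrs n a then embexp (Yexp b w) else 0)"
    unfolding Aexp_def by (simp add: sum_subtractf)
  also have "\<dots> = embexp (Yexp a (w - 1) + Yexp a (w + 1)) - (\<Sum>b\<in>dynkin_nbrs n a. embexp (Yexp b w))"
  proof -
    have "{1..n} \<inter> dynkin_nbrs n a = dynkin_nbrs n a"
      by (auto simp: dynkin_nbrs_def)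
    then show ?thesis
      using assms by (simp add: sum.If_cases)
  qed
  finally show ?thesis
    by (simp add: Aexp_Y_def embexp_diff embexp_sum)
qed

lemma screen_dlog_Aexp_Y: "1 \<le> a \<Longrightarrow> screen_dlog a (Aexp_Y n a w) = Svar a (w - 1) + Svar a (w + 1)"
  by (simp add: Aexp_Y_def screen_dlog_add screen_dlog_diff screen_dlog_sum dynkin_nbrs_def)

lemma dynkin_nbrs_low: "1 \<le> a \<Longrightarrow> a + 3 \<le> n \<Longrightarrow> dynkin_nbrs n a = {a - 1, a + 1} - {0}"
  by (auto simp: dynkin_nbrs_def cartanD_def)

lemma dynkin_nbrs_fork: "4 \<le> n \<Longrightarrow> dynkin_nbrs n (n - 2) = {n - 3, n - 1, n}"
  by (auto simp: dynkin_nbrs_def cartanD_def)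

lemma dynkin_nbrs_tips: "4 \<le> n \<Longrightarrow> dynkin_nbrs n (n - 1) = {n - 2}" "4 \<le> n \<Longrightarrow> dynkin_nbrs n n = {n - 2}"
  by (auto simp: dynkin_nbrs_def cartanD_def)

lemma Aexp_Y_low:
  assumes "1 \<le> a" "a + 3 \<le> n"
  shows "Aexp_Y n a w = Yexp a (w - 1) + Yexp a (w + 1) - Yexp (a - 1) w - Yexp (a + 1) w"
proof -
  have "(\<Sum>b\<in>{a - 1, a + 1} - {0}. Yexp b w) = Yexp (a - 1) w + Yexp (a + 1) w"
    using assms(1) by (cases "a = 1") (simp_all add: Yexp_def insert_Diff_if)
  then show ?thesis
    using assms by (simp add: Aexp_Y_def dynkin_nbrs_low)
qed

lemma Aexp_Y_fork:
  assumes "4 \<le> n"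
  shows "Aexp_Y n (n - 2) w = Yexp (n - 2) (w - 1) + Yexp (n - 2) (w + 1) - Yexp (n - 3) w - Yexp (n - 1) w - Yexp n w"
proof -
  have "n - 3 \<noteq> n - 1" "n - 3 \<noteq> n" "n - 1 \<noteq> n"
    using assms by arith+
  then show ?thesis
    using assms by (simp add: Aexp_Y_def dynkin_nbrs_fork algebra_simps)
qed

lemma Aexp_Y_tips:
  assumes "4 \<le> n"
  shows "Aexp_Y n (n - 1) w = Yexp (n - 1) (w - 1) + Yexp (n - 1) (w + 1) - Yexp (n - 2) w"
    and "Aexp_Y n n w = Yexp n (w - 1) + Yexp n (w + 1) - Yexp (n - 2) w"
  using dynkin_nbrs_tips[OF assms] by (simp_all add: Aexp_Y_def)

definition zz_exp :: "nat \<Rightarrow> nat \<Rightarrow> complex \<Rightarrow> (var \<Rightarrow>\<^sub>0 int)" where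
  "zz_exp n a u =
     (if a \<le> n - 2 then Yexp a (u + of_nat a) - Yexp (a - 1) (u + of_nat a + 1)
      else if a = n - 1 then Yexp n (u + of_nat n - 1) + Yexp (n - 1) (u + of_nat n - 1)
                              - Yexp (n - 2) (u + of_nat n)
      else Yexp n (u + of_nat n - 1) - Yexp (n - 1) (u + of_nat n + 1))"

definition zbar_exp :: "nat \<Rightarrow> nat \<Rightarrow> complex \<Rightarrow> (var \<Rightarrow>\<^sub>0 int)" where
  "zbar_exp n a u =
     (if a \<le> n - 2 then Yexp (a - 1) (u + 2 * of_nat n - of_nat a - 1) - Yexp a (u + 2 * of_nat n - of_nat a)
      else if a = n - 1 then Yexp (n - 2) (u + of_nat n)
                              - Yexp n (u + of_nat n + 1) - Yexp (n - 1) (u + of_nat n + 1)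
      else Yexp (n - 1) (u + of_nat n - 1) - Yexp n (u + of_nat n + 1))"

lemma zz_eq_lmono: "zz n a = (\<lambda>u. lmono (zz_exp n a u))"
  by (simp add: fun_eq_iff zz_def zz_exp_def Yv_eq_lmono Yinv_eq_lmono lmono_mult)

lemma zbar_eq_lmono: "zbar n a = (\<lambda>u. lmono (zbar_exp n a u))"
  by (simp add: fun_eq_iff zbar_def zbar_exp_def Yv_eq_lmono Yinv_eq_lmono lmono_mult)

text \<open>The nodes \<open>c\<close> such that \<open>Y\<^sub>c\<close> occurs in \<open>z\<^sub>b\<close> (equivalently, in \<open>zbar\<^sub>b\<close>).\<close>

definition z_nodes :: "nat \<Rightarrow> nat \<Rightarrow> nat set" where
  "z_nodes n b = (if b \<le> n - 2 then {b - 1, b} else if b = n - 1 then {n - 2, n - 1, n} else {n - 1, n})"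

lemma screen_dlog_zz_exp:
  assumes "1 \<le> a" "a \<notin> z_nodes n b"
  shows "screen_dlog a (zz_exp n b u) = 0"
proof (cases "b \<le> n - 2")
  case True
  then show ?thesis
    using assms by (simp add: zz_exp_def z_nodes_def screen_dlog_diff)
next
  case False
  then show ?thesis
    using assms by (cases "b = n - 1") (simp_all add: zz_exp_def z_nodes_def screen_dlog_add screen_dlog_diff)
qed

lemma screen_dlog_zbar_exp:
  assumes "1 \<le> a" "a \<notin> z_nodes n b"
  shows "screen_dlog a (zbar_exp n b u) = 0"
proof (cases "b \<le> n - 2")
  case True
  then show ?thesis
    using assms by (simp add: zbar_exp_def z_nodes_def screen_dlog_diff)
next
  case False
  then show ?thesis
    using assms by (cases "b = n - 1") (simp_all add: zbar_exp_def z_nodes_def screen_dlog_diff)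
qed

lemma not_in_z_nodes:
  assumes "4 \<le> n" "b \<in> {1..n}"
  shows "a < n \<Longrightarrow> b \<noteq> a \<Longrightarrow> b \<noteq> a + 1 \<Longrightarrow> a \<notin> z_nodes n b"
    and "b < n - 1 \<Longrightarrow> n \<notin> z_nodes n b"
  using assms by (auto simp: z_nodes_def)

section \<open>The factors of \<open>L(u)\<close> in the screening kernel\<close>

lemma kernel_series_zz_factor:
  "1 \<le> a \<Longrightarrow> a \<notin> z_nodes n b \<Longrightarrow> kernel_series n a (1 - dmon (zz n b) 2)"
  unfolding zz_eq_lmono
  by (intro kernel_series_1_minus_dmon lmono_in_screen_kernel screen_dlog_zz_exp)

lemma kernel_series_zbar_factor:
  "1 \<le> a \<Longrightarrow> a \<notin> z_nodes n b \<Longrightarrow> kernel_series n a (1 - dmon (zbar n b) 2)"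
  unfolding zbar_eq_lmono
  by (intro kernel_series_1_minus_dmon lmono_in_screen_kernel screen_dlog_zbar_exp)

lemma kernel_series_adjacent_pair:
  assumes "1 \<le> a" "a \<le> n"
    and step: "\<And>u. y u = x u + Aexp_Y n a (w u + 1)"
    and dlog: "\<And>u. screen_dlog a (y u) = Svar a (w u)"
    and free: "\<And>u. screen_dlog a (x u + y (u + 2)) = 0"
  shows "kernel_series n a ((1 - dmon (\<lambda>u. lmono (x u)) 2) * (1 - dmon (\<lambda>u. lmono (y u)) 2))"
proof (rule kernel_series_dfac_pair)
  fix u
  have "Svar a (w u) = screen_dlog a (x u) + (Svar a (w u) + Svar a (w u + 2))"
    using dlog[of u] assms(1) by (simp add: step screen_dlog_add screen_dlog_Aexp_Y add.assoc)
  then have "screen_dlog a (x u) = - Svar a (w u + 2)"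
    by (simp add: eq_neg_iff_add_eq_0 add.left_commute)
  moreover have "embexp (y u) = embexp (x u) + Aexp n a (w u + 1)"
    using assms(1,2) by (simp add: step embexp_add Aexp_eq_embexp_Aexp_Y)
  ultimately show "lmono (x u) + lmono (y u) \<in> screen_kernel n a"
    by (rule lmono_add_lmono_in_screen_kernel[OF assms(1,2) dlog])
  show "lmono (x u) * lmono (y (u + 2)) \<in> screen_kernel n a"
    by (simp add: lmono_mult lmono_in_screen_kernel free)
qed

lemmas z_exp_simps = zz_exp_def zbar_exp_def Aexp_Y_low Aexp_Y_fork Aexp_Y_tips[simplified]
  screen_dlog_add screen_dlog_diff algebra_simps

lemma kernel_series_zbar_pair:
  assumes "4 \<le> n" "1 \<le> a" "a < n"
  shows "kernel_series n a ((1 - dmon (zbar n a) 2) * (1 - dmon (zbar n (a + 1)) 2))"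
proof -
  consider "a + 3 \<le> n" | "a = n - 2" | "a = n - 1"
    using assms by arith
  then show ?thesis
  proof cases
    case 1
    have idx: "a \<le> n - 2" "a + 1 \<le> n - 2" "a - 1 \<noteq> a"
      using assms 1 by arith+
    show ?thesis
      unfolding zbar_eq_lmono
      by (intro kernel_series_adjacent_pair[where w = "\<lambda>u. u + 2 * of_nat n - of_nat a - 2"])
         (use assms 1 idx in \<open>simp_all add: z_exp_simps idx\<close>)
  next
    case 2
    have idx: "a + 1 = n - 1" "\<not> n - 1 \<le> n - 2" "n - 2 - 1 = n - 3" "n - 3 \<noteq> n - 2" "n - 1 \<noteq> n - 2" "n \<noteq> n - 2"
      using assms 2 by arith+
    show ?thesis
      unfolding zbar_eq_lmono
      by (intro kernel_series_adjacent_pair[where w = "\<lambda>u. u + of_nat n"])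
         (use assms 2 idx in \<open>simp_all add: z_exp_simps idx\<close>)
  next
    case 3
    have idx: "a + 1 = n" "\<not> n - 1 \<le> n - 2" "\<not> n \<le> n - 2" "n \<noteq> n - 1" "n - 2 \<noteq> n - 1"
      using assms 3 by arith+
    show ?thesis
      unfolding zbar_eq_lmono
      by (intro kernel_series_adjacent_pair[where w = "\<lambda>u. u + of_nat n - 1"])
         (use assms 3 idx in \<open>simp_all add: z_exp_simps idx\<close>)
  qed
qed

lemma kernel_series_zz_pair:
  assumes "4 \<le> n" "1 \<le> a" "a < n"
  shows "kernel_series n a ((1 - dmon (zz n (a + 1)) 2) * (1 - dmon (zz n a) 2))"
proof -
  consider "a + 3 \<le> n" | "a = n - 2" | "a = n - 1"
    using assms by arith
  then show ?thesis
  proof cases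
    case 1
    have idx: "a \<le> n - 2" "a + 1 \<le> n - 2" "a - 1 \<noteq> a"
      using assms 1 by arith+
    show ?thesis
      unfolding zz_eq_lmono
      by (intro kernel_series_adjacent_pair[where w = "\<lambda>u. u + of_nat a"])
         (use assms 1 idx in \<open>simp_all add: z_exp_simps idx\<close>)
  next
    case 2
    have idx: "a + 1 = n - 1" "\<not> n - 1 \<le> n - 2" "n - 2 - 1 = n - 3" "n - 3 \<noteq> n - 2" "n - 1 \<noteq> n - 2" "n \<noteq> n - 2"
      using assms 2 by arith+
    show ?thesis
      unfolding zz_eq_lmono
      by (intro kernel_series_adjacent_pair[where w = "\<lambda>u. u + of_nat n - 2"])
         (use assms 2 idx in \<open>simp_all add: z_exp_simps idx\<close>)
  next
    case 3
    have idx: "a + 1 = n" "\<not> n - 1 \<le> n - 2" "\<not> n \<le> n - 2" "n \<noteq> n - 1" "n - 2 \<noteq> n - 1"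
      using assms 3 by arith+
    show ?thesis
      unfolding zz_eq_lmono
      by (intro kernel_series_adjacent_pair[where w = "\<lambda>u. u + of_nat n - 1"])
         (use assms 3 idx in \<open>simp_all add: z_exp_simps idx\<close>)
  qed
qed

lemma kernel_series_top_pairs:
  assumes "4 \<le> n"
  shows "kernel_series n n ((1 - dmon (zbar n (n - 1)) 2) * (1 - dmon (zz n n) 2))"
    and "kernel_series n n ((1 - dmon (zbar n n) 2) * (1 - dmon (zz n (n - 1)) 2))"
proof -
  have idx: "\<not> n - 1 \<le> n - 2" "\<not> n \<le> n - 2" "n - 1 \<noteq> n" "n - 2 \<noteq> n"
    using assms by arith+
  show "kernel_series n n ((1 - dmon (zbar n (n - 1)) 2) * (1 - dmon (zz n n) 2))"
    unfolding zz_eq_lmono zbar_eq_lmono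
    by (intro kernel_series_adjacent_pair[where w = "\<lambda>u. u + of_nat n - 1"])
       (use assms idx in \<open>simp_all add: z_exp_simps idx\<close>)
  show "kernel_series n n ((1 - dmon (zbar n n) 2) * (1 - dmon (zz n (n - 1)) 2))"
    unfolding zz_eq_lmono zbar_eq_lmono
    by (intro kernel_series_adjacent_pair[where w = "\<lambda>u. u + of_nat n - 1"])
       (use assms idx in \<open>simp_all add: z_exp_simps idx\<close>)
qed

lemma kernel_series_geom4_factors:
  assumes "4 \<le> n"
  shows "1 \<le> a \<Longrightarrow> a < n \<Longrightarrow> kernel_series n a (geom4 (\<lambda>u. zz n n u * zbar n n (u + 2)))"
    and "kernel_series n n (geom4 (\<lambda>u. zbar n n u * zz n n (u + 2)))"
proof -
  have idx: "\<not> n - 1 \<le> n - 2" "\<not> n \<le> n - 2" "n - 1 \<noteq> n"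
    using assms by arith+
  show "1 \<le> a \<Longrightarrow> a < n \<Longrightarrow> kernel_series n a (geom4 (\<lambda>u. zz n n u * zbar n n (u + 2)))"
    unfolding zz_eq_lmono zbar_eq_lmono
    by (rule kernel_series_geom4, unfold lmono_mult, rule lmono_in_screen_kernel)
       (use idx in \<open>simp add: z_exp_simps idx\<close>)
  show "kernel_series n n (geom4 (\<lambda>u. zbar n n u * zz n n (u + 2)))"
    unfolding zz_eq_lmono zbar_eq_lmono
    by (rule kernel_series_geom4, unfold lmono_mult, rule lmono_in_screen_kernel)
       (use assms idx in \<open>simp add: z_exp_simps idx\<close>)
qed

section \<open>The factorization of \<open>L(u)\<close>\<close>

definition L_series :: "nat \<Rightarrow> dseries" where
  "L_series n = prod_list (map (\<lambda>b. 1 - dmon (zbar n b) 2) [1..<n+1])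
     * geom4 (\<lambda>u. zz n n u * zbar n n (u + 2))
     * prod_list (map (\<lambda>b. 1 - dmon (zz n b) 2) (rev [1..<n+1]))"

lemma Lser_eq_coeff_L_series: "Lser n = coeff (L_series n)"
  unfolding Lser_def foldr_dmult_eq_coeff_prod_list L_series_def
  by (simp add: Abs_dseries_dfac geom4.abs_eq mult.assoc o_def)

lemma kernel_series_prod_list_adjacent:
  assumes "xs = ys @ p # q # zs"
    and "\<And>b. b \<in> set ys \<union> set zs \<Longrightarrow> kernel_series n a (F b)"
    and "kernel_series n a (F p * F q)"
  shows "kernel_series n a (prod_list (map F xs))"
proof -
  have "prod_list (map F xs) = prod_list (map F ys) * (F p * F q) * prod_list (map F zs)"
    by (simp add: assms(1) mult.assoc)
  then show ?thesis
    using assms(2,3) by (auto intro!: kernel_series_mult kernel_series_prod_list)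
qed

lemma upt_split_adjacent:
  assumes "1 \<le> a" "a < n"
  shows "[1..<n+1] = [1..<a] @ a # (a + 1) # [a + 2..<n+1]"
proof -
  have "[1..<n+1] = [1..<a] @ [a..<n+1]"
    using assms upt_add_eq_append[of 1 a "n - a + 1"] by simp
  also have "[a..<n+1] = a # (a + 1) # [a + 2..<n+1]"
    using assms by (simp add: upt_conv_Cons)
  finally show ?thesis .
qed

lemma kernel_series_L_series_below:
  assumes "4 \<le> n" "1 \<le> a" "a < n"
  shows "kernel_series n a (L_series n)"
proof -
  have free: "a \<notin> z_nodes n b" if "b \<in> set [1..<a] \<union> set [a + 2..<n+1]" for b
    using that assms by (intro not_in_z_nodes(1)) auto
  have "kernel_series n a (prod_list (map (\<lambda>b. 1 - dmon (zbar n b) 2) [1..<n+1]))"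
  proof (rule kernel_series_prod_list_adjacent[OF upt_split_adjacent[OF assms(2,3)]])
    show "kernel_series n a (1 - dmon (zbar n b) 2)" if "b \<in> set [1..<a] \<union> set [a + 2..<n+1]" for b
      using assms(2) free[OF that] by (rule kernel_series_zbar_factor)
  qed (rule kernel_series_zbar_pair[OF assms])
  moreover have "kernel_series n a (prod_list (map (\<lambda>b. 1 - dmon (zz n b) 2) (rev [1..<n+1])))"
  proof (rule kernel_series_prod_list_adjacent)
    show "rev [1..<n+1] = rev [a + 2..<n+1] @ (a + 1) # a # rev [1..<a]"
      unfolding upt_split_adjacent[OF assms(2,3)] by simp
    show "kernel_series n a (1 - dmon (zz n b) 2)" if "b \<in> set (rev [a + 2..<n+1]) \<union> set (rev [1..<a])" for b
      using assms(2) free that by (intro kernel_series_zz_factor) auto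
  qed (rule kernel_series_zz_pair[OF assms])
  ultimately show ?thesis
    unfolding L_series_def using assms
    by (intro kernel_series_mult kernel_series_geom4_factors) simp_all
qed

text \<open>For \<open>a = n\<close> the pairs are \<open>(zbar\<^sub>n\<^sub>-\<^sub>1, z\<^sub>n)\<close> and \<open>(zbar\<^sub>n, z\<^sub>n\<^sub>-\<^sub>1)\<close>; the swap identity
  turns \<open>(1 - X) G (1 - Y)\<close> into \<open>(1 - Y) G' (1 - X)\<close>, which makes them neighbours.\<close>

lemma kernel_series_L_series_top:
  assumes "4 \<le> n"
  shows "kernel_series n n (L_series n)"
proof -
  define X where "X = dmon (zbar n n) 2"
  define Y where "Y = dmon (zz n n) 2"
  define G where "G = geom4 (\<lambda>u. zz n n u * zbar n n (u + 2))"
  define G' where "G' = geom4 (\<lambda>u. zbar n n u * zz n n (u + 2))"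
  define P where "P = prod_list (map (\<lambda>b. 1 - dmon (zbar n b) 2) [1..<n-1])"
  define P' where "P' = prod_list (map (\<lambda>b. 1 - dmon (zz n b) 2) (rev [1..<n-1]))"
  have "[1..<n+1] = [1..<n-1] @ [n - 1, n]"
    using assms upt_add_eq_append[of 1 "n - 1" 2] by (simp add: upt_conv_Cons)
  then have "L_series n = P * (1 - dmon (zbar n (n - 1)) 2) * ((1 - X) * G * (1 - Y)) * (1 - dmon (zz n (n - 1)) 2) * P'"
    by (simp add: L_series_def P_def P'_def X_def Y_def G_def mult.assoc)
  also have "(1 - X) * G * (1 - Y) = (1 - Y) * G' * (1 - X)"
    by (rule one_minus_swap_inverse) (simp_all add: X_def Y_def G_def G'_def dmon_mult geom4_inverse)
  finally have "L_series n = P * ((1 - dmon (zbar n (n - 1)) 2) * (1 - Y)) * G' * ((1 - X) * (1 - dmon (zz n (n - 1)) 2)) * P'"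
    by (simp add: mult.assoc)
  moreover have "kernel_series n n P" "kernel_series n n P'"
    using assms by (auto simp: P_def P'_def not_in_z_nodes(2)
        intro!: kernel_series_prod_list kernel_series_zbar_factor kernel_series_zz_factor)
  ultimately show ?thesis
    using kernel_series_top_pairs[OF assms] kernel_series_geom4_factors(2)[OF assms]
    by (simp add: X_def Y_def G'_def kernel_series_mult)
qed

theorem mainTheorem12:
  fixes n a :: nat
  assumes "4 \<le> n" and "1 \<le> a" and "a \<le> n"
  shows "\<forall>j u. S_zero n (screen a (Lser n j u))"
proof -
  have "kernel_series n a (L_series n)"
  proof (cases "a = n")
    case True
    then show ?thesis
      using kernel_series_L_series_top[OF assms(1)] by simp
  next
    case False
    then show ?thesis
      using assms kernel_series_L_series_below by simp
  qed
  then show ?thesis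
    by (simp add: Lser_eq_coeff_L_series kernel_series_def screen_kernel_def S_zero_def)
qed

end
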